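(* Let $\Omega\subset\mathbb{R}^2$ be a bounded domain, $X\subset\overline{\Omega}$ finite with $X\setminus\partial\Omega\subset\mathrm{int}(\mathrm{conv}(X\cap\partial\Omega))$, and $f_X$ a discrete load on $X$. Assume $(\mathbf{s},\mathbf{q},\mathbf{r})\in\mathbb{R}^{3\times m}$ solves $(\mathcal{P}_X)$ and $(\mathbf{u}_1,\mathbf{u}_2,\mathbf{w})\in\mathbb{R}^{3\times n}$ (with some slack vectors) solves $(\mathcal{P}_X^* )$. Then the pair $$\mathbf{z}=\tfrac12\mathbf{w},\qquad\hat{\mathbf{s}}=\mathbf{J}(\mathbf{z})\mathbf{s}$$ solves problem $(\mathrm{MVGS}_X)$, and $\mathcal{V}_{X,\min}=\mathcal{Z}_X$.
   Context: Discrete setting: $\bar n=\#X$, $n=\#(X\setminus\partial\Omega)$, enumeration $\chi:\{1,\dots,n\}\to X\setminus\partial\Omega$; $m=\bar n(\bar n-1)/2$, enumeration $k\mapsto\{\chi_-(k),\chi_+(k)\}$ of unordered pairs of distinct points of $X$. $f_i=f_X(\{\chi(i)\})$, $l_k=|\chi_+(k)-\chi_-(k)|$. Vectors in $\mathbb{R}^n$ are identified with functions on $X$ vanishing on $X\cap\partial\Omega$. $\mathbf{B}_1,\mathbf{B}_2,\mathbf{D}\in\mathbb{R}^{m\times n}$: $(\mathbf{B}_1\mathbf{u}_1+\mathbf{B}_2\mathbf{u}_2)_k=(u(\chi_+(k))-u(\chi_-(k)))\cdot(\chi_+(k)-\chi_-(k))/l_k$ (with $u=(u_1,u_2)$ in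 a fixed Cartesian basis), $(\mathbf{D}\mathbf{w})_k=w(\chi_+(k))-w(\chi_-(k))$. $\mathrm{K}=\{(t_1,t_2,t_3):t_1,t_2\ge0,2t_1t_2\ge t_3^2\}$. $(\mathcal{P}_X)$: $\inf\{\mathbf{l}^\top\mathbf{s}+2\mathbf{l}^\top\mathbf{r}:\mathbf{s},\mathbf{r}\in\mathbb{R}^m_+,\mathbf{q}\in\mathbb{R}^m,\mathbf{B}_1^\top\mathbf{s}=\mathbf{B}_2^\top\mathbf{s}=\mathbf{0},\mathbf{D}^\top\mathbf{q}=\mathbf{f},(r_k,s_k,q_k)\in\mathrm{K}\ \forall k\}$. $(\mathcal{P}_X^* )$: $\sup\{\mathbf{f}^\top\mathbf{w}:\mathbf{t}_2+\mathbf{B}_1\mathbf{u}_1+\mathbf{B}_2\mathbf{u}_2=\mathbf{l},\mathbf{t}_3+\mathbf{D}\mathbf{w}=\mathbf{0},\mathbf{t}_1=2\mathbf{l},(t_{1;k},t_{2;k},t_{3;k})\in\mathrm{K}\ \forall k\}$ over $\mathbf{u}_1,\mathbf{u}_2,\mathbf{w}\in\mathbb{R}^n$, $\mathbf{t}_1,\mathbf{t}_2\in\mathbb{R}^m_+$, $\mathbf{t}_3\in\mathbb{R}^m$. It is known that $\min\mathcal{P}_X=\max\mathcal{P}_X^*=:\mathcal{Z}_X$. For $\mathbf{z}\in\mathbb{R}^n$: $\Delta_k(\mathbf{z})=(\mathbf{D}\mathbf{z})_k/l_k$, $\mathbf{J}(\mathbf{z})$ diagonal with $J_{kk}(\mathbf{z})=\sqrt{1+\Delta_k(\mathbf{z})^2}$,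 $\hat l_k(\mathbf{z})=J_{kk}(\mathbf{z})l_k$. $(\mathrm{MVGS}_X)$: $\mathcal{V}_{X,\min}=\inf\{\sum_k\hat l_k(\mathbf{z})\hat s_k:\mathbf{z}\in\mathbb{R}^n,\hat{\mathbf{s}}\in\mathbb{R}^m_+,\ \mathbf{B}_1^\top\mathbf{s}=\mathbf{0},\mathbf{B}_2^\top\mathbf{s}=\mathbf{0},\mathbf{D}^\top\mathbf{q}=\mathbf{f}\text{ where }s_k=\hat s_k/J_{kk}(\mathbf{z}),\ q_k=\Delta_k(\mathbf{z})\hat s_k/J_{kk}(\mathbf{z})\}$. *)

theory Defs
  imports "HOL-Analysis.Analysis"
begin

type_synonym pt = "real ^ 2"

text \<open>Vectors in R^n are index functions nat => real (only indices 1..n matter);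
  vectors in R^m likewise (indices 1..m). The point value of an R^n vector v
  at a point p (zero at points not in the image of chi, i.e. at boundary points).\<close>

definition ptval :: "(nat \<Rightarrow> pt) \<Rightarrow> nat \<Rightarrow> (nat \<Rightarrow> real) \<Rightarrow> pt \<Rightarrow> real" where
  "ptval chi n v p = (\<Sum>i\<in>{1..n}. if chi i = p then v i else 0)"

definition len :: "(nat \<Rightarrow> pt) \<Rightarrow> (nat \<Rightarrow> pt) \<Rightarrow> nat \<Rightarrow> real" where
  "len chim chip k = norm (chip k - chim k)"

definition indic_diff :: "(nat \<Rightarrow> pt) \<Rightarrow> (nat \<Rightarrow> pt) \<Rightarrow> (nat \<Rightarrow> pt) \<Rightarrow> nat \<Rightarrow> nat \<Rightarrow> real" where
  "indic_diff chi chim chip k i =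
     (if chi i = chip k then 1 else 0) - (if chi i = chim k then 1 else 0)"

definition matB1 :: "(nat \<Rightarrow> pt) \<Rightarrow> (nat \<Rightarrow> pt) \<Rightarrow> (nat \<Rightarrow> pt) \<Rightarrow> nat \<Rightarrow> nat \<Rightarrow> real" where
  "matB1 chi chim chip k i =
     indic_diff chi chim chip k i * (chip k - chim k) $ 1 / len chim chip k"

definition matB2 :: "(nat \<Rightarrow> pt) \<Rightarrow> (nat \<Rightarrow> pt) \<Rightarrow> (nat \<Rightarrow> pt) \<Rightarrow> nat \<Rightarrow> nat \<Rightarrow> real" where
  "matB2 chi chim chip k i =
     indic_diff chi chim chip k i * (chip k - chim k) $ 2 / len chim chip k"

definition matD :: "(nat \<Rightarrow> pt) \<Rightarrow> (nat \<Rightarrow> pt) \<Rightarrow> (nat \<Rightarrow> pt) \<Rightarrow> nat \<Rightarrow> nat \<Rightarrow> real" where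
  "matD chi chim chip k i = indic_diff chi chim chip k i"

definition mv :: "nat \<Rightarrow> (nat \<Rightarrow> nat \<Rightarrow> real) \<Rightarrow> (nat \<Rightarrow> real) \<Rightarrow> nat \<Rightarrow> real" where
  "mv n A v k = (\<Sum>i\<in>{1..n}. A k i * v i)"

definition tmv :: "nat \<Rightarrow> (nat \<Rightarrow> nat \<Rightarrow> real) \<Rightarrow> (nat \<Rightarrow> real) \<Rightarrow> nat \<Rightarrow> real" where
  "tmv m A s i = (\<Sum>k\<in>{1..m}. A k i * s k)"

definition inK :: "real \<Rightarrow> real \<Rightarrow> real \<Rightarrow> bool" where
  "inK t1 t2 t3 \<longleftrightarrow> t1 \<ge> 0 \<and> t2 \<ge> 0 \<and> 2 * t1 * t2 \<ge> t3\<^sup>2"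

definition P_feasible ::
  "(nat \<Rightarrow> pt) \<Rightarrow> nat \<Rightarrow> (nat \<Rightarrow> pt) \<Rightarrow> (nat \<Rightarrow> pt) \<Rightarrow> nat \<Rightarrow> (nat \<Rightarrow> real)
   \<Rightarrow> (nat \<Rightarrow> real) \<Rightarrow> (nat \<Rightarrow> real) \<Rightarrow> (nat \<Rightarrow> real) \<Rightarrow> bool" where
  "P_feasible chi n chim chip m f s q r \<longleftrightarrow>
     (\<forall>k\<in>{1..m}. s k \<ge> 0 \<and> r k \<ge> 0 \<and> inK (r k) (s k) (q k)) \<and>
     (\<forall>i\<in>{1..n}. tmv m (matB1 chi chim chip) s i = 0 \<and>
                 tmv m (matB2 chi chim chip) s i = 0 \<and>
                 tmv m (matD chi chim chip) q i = f i)"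

definition P_obj :: "(nat \<Rightarrow> pt) \<Rightarrow> (nat \<Rightarrow> pt) \<Rightarrow> nat \<Rightarrow> (nat \<Rightarrow> real) \<Rightarrow> (nat \<Rightarrow> real) \<Rightarrow> real" where
  "P_obj chim chip m s r =
     (\<Sum>k\<in>{1..m}. len chim chip k * s k) + 2 * (\<Sum>k\<in>{1..m}. len chim chip k * r k)"

definition P_solves ::
  "(nat \<Rightarrow> pt) \<Rightarrow> nat \<Rightarrow> (nat \<Rightarrow> pt) \<Rightarrow> (nat \<Rightarrow> pt) \<Rightarrow> nat \<Rightarrow> (nat \<Rightarrow> real)
   \<Rightarrow> (nat \<Rightarrow> real) \<Rightarrow> (nat \<Rightarrow> real) \<Rightarrow> (nat \<Rightarrow> real) \<Rightarrow> bool" where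
  "P_solves chi n chim chip m f s q r \<longleftrightarrow>
     P_feasible chi n chim chip m f s q r \<and>
     (\<forall>s' q' r'. P_feasible chi n chim chip m f s' q' r' \<longrightarrow>
        P_obj chim chip m s r \<le> P_obj chim chip m s' r')"

definition Z_X :: "(nat \<Rightarrow> pt) \<Rightarrow> nat \<Rightarrow> (nat \<Rightarrow> pt) \<Rightarrow> (nat \<Rightarrow> pt) \<Rightarrow> nat \<Rightarrow> (nat \<Rightarrow> real) \<Rightarrow> real" where
  "Z_X chi n chim chip m f =
     Inf {P_obj chim chip m s r | s q r. P_feasible chi n chim chip m f s q r}"

definition D_feasible ::
  "(nat \<Rightarrow> pt) \<Rightarrow> nat \<Rightarrow> (nat \<Rightarrow> pt) \<Rightarrow> (nat \<Rightarrow> pt) \<Rightarrow> nat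
   \<Rightarrow> (nat \<Rightarrow> real) \<Rightarrow> (nat \<Rightarrow> real) \<Rightarrow> (nat \<Rightarrow> real) \<Rightarrow> bool" where
  "D_feasible chi n chim chip m u1 u2 w \<longleftrightarrow>
     (\<exists>t1 t2 t3 :: nat \<Rightarrow> real. \<forall>k\<in>{1..m}.
        t1 k \<ge> 0 \<and> t2 k \<ge> 0 \<and>
        t2 k + mv n (matB1 chi chim chip) u1 k + mv n (matB2 chi chim chip) u2 k = len chim chip k \<and>
        t3 k + mv n (matD chi chim chip) w k = 0 \<and>
        t1 k = 2 * len chim chip k \<and>
        inK (t1 k) (t2 k) (t3 k))"

definition D_obj :: "nat \<Rightarrow> (nat \<Rightarrow> real) \<Rightarrow> (nat \<Rightarrow> real) \<Rightarrow> real" where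
  "D_obj n f w = (\<Sum>i\<in>{1..n}. f i * w i)"

definition D_solves ::
  "(nat \<Rightarrow> pt) \<Rightarrow> nat \<Rightarrow> (nat \<Rightarrow> pt) \<Rightarrow> (nat \<Rightarrow> pt) \<Rightarrow> nat \<Rightarrow> (nat \<Rightarrow> real)
   \<Rightarrow> (nat \<Rightarrow> real) \<Rightarrow> (nat \<Rightarrow> real) \<Rightarrow> (nat \<Rightarrow> real) \<Rightarrow> bool" where
  "D_solves chi n chim chip m f u1 u2 w \<longleftrightarrow>
     D_feasible chi n chim chip m u1 u2 w \<and>
     (\<forall>u1' u2' w'. D_feasible chi n chim chip m u1' u2' w' \<longrightarrow>
        D_obj n f w' \<le> D_obj n f w)"

definition Delta :: "(nat \<Rightarrow> pt) \<Rightarrow> nat \<Rightarrow> (nat \<Rightarrow> pt) \<Rightarrow> (nat \<Rightarrow> pt) \<Rightarrow> (nat \<Rightarrow> real) \<Rightarrow> nat \<Rightarrow> real" where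
  "Delta chi n chim chip z k = mv n (matD chi chim chip) z k / len chim chip k"

definition Jkk :: "(nat \<Rightarrow> pt) \<Rightarrow> nat \<Rightarrow> (nat \<Rightarrow> pt) \<Rightarrow> (nat \<Rightarrow> pt) \<Rightarrow> (nat \<Rightarrow> real) \<Rightarrow> nat \<Rightarrow> real" where
  "Jkk chi n chim chip z k = sqrt (1 + (Delta chi n chim chip z k)\<^sup>2)"

definition lhat :: "(nat \<Rightarrow> pt) \<Rightarrow> nat \<Rightarrow> (nat \<Rightarrow> pt) \<Rightarrow> (nat \<Rightarrow> pt) \<Rightarrow> (nat \<Rightarrow> real) \<Rightarrow> nat \<Rightarrow> real" where
  "lhat chi n chim chip z k = Jkk chi n chim chip z k * len chim chip k"

definition MVGS_feasible ::
  "(nat \<Rightarrow> pt) \<Rightarrow> nat \<Rightarrow> (nat \<Rightarrow> pt) \<Rightarrow> (nat \<Rightarrow> pt) \<Rightarrow> nat \<Rightarrow> (nat \<Rightarrow> real)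
   \<Rightarrow> (nat \<Rightarrow> real) \<Rightarrow> (nat \<Rightarrow> real) \<Rightarrow> bool" where
  "MVGS_feasible chi n chim chip m f z shat \<longleftrightarrow>
     (\<forall>k\<in>{1..m}. shat k \<ge> 0) \<and>
     (let s = (\<lambda>k. shat k / Jkk chi n chim chip z k);
          q = (\<lambda>k. Delta chi n chim chip z k * shat k / Jkk chi n chim chip z k)
      in \<forall>i\<in>{1..n}. tmv m (matB1 chi chim chip) s i = 0 \<and>
                    tmv m (matB2 chi chim chip) s i = 0 \<and>
                    tmv m (matD chi chim chip) q i = f i)"

definition MVGS_obj :: "(nat \<Rightarrow> pt) \<Rightarrow> nat \<Rightarrow> (nat \<Rightarrow> pt) \<Rightarrow> (nat \<Rightarrow> pt) \<Rightarrow> nat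
   \<Rightarrow> (nat \<Rightarrow> real) \<Rightarrow> (nat \<Rightarrow> real) \<Rightarrow> real" where
  "MVGS_obj chi n chim chip m z shat = (\<Sum>k\<in>{1..m}. lhat chi n chim chip z k * shat k)"

definition MVGS_solves ::
  "(nat \<Rightarrow> pt) \<Rightarrow> nat \<Rightarrow> (nat \<Rightarrow> pt) \<Rightarrow> (nat \<Rightarrow> pt) \<Rightarrow> nat \<Rightarrow> (nat \<Rightarrow> real)
   \<Rightarrow> (nat \<Rightarrow> real) \<Rightarrow> (nat \<Rightarrow> real) \<Rightarrow> bool" where
  "MVGS_solves chi n chim chip m f z shat \<longleftrightarrow>
     MVGS_feasible chi n chim chip m f z shat \<and>
     (\<forall>z' shat'. MVGS_feasible chi n chim chip m f z' shat' \<longrightarrow>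
        MVGS_obj chi n chim chip m z shat \<le> MVGS_obj chi n chim chip m z' shat')"

definition V_min :: "(nat \<Rightarrow> pt) \<Rightarrow> nat \<Rightarrow> (nat \<Rightarrow> pt) \<Rightarrow> (nat \<Rightarrow> pt) \<Rightarrow> nat \<Rightarrow> (nat \<Rightarrow> real) \<Rightarrow> real" where
  "V_min chi n chim chip m f =
     Inf {MVGS_obj chi n chim chip m z shat | z shat. MVGS_feasible chi n chim chip m f z shat}"

end

theory Submission
  imports Defs "HOL-Library.Function_Algebras"
begin

(*
  For every bar k the pairing of a primal triple (s, q, r) in the rotated cone with the dual slacks
  (2 l, l - (B u)_k, -(D w)_k) is nonnegative, and zero only if 2 l_k q_k = s_k (D w)_k; summed over
  all bars this pairing is exactly the duality gap.  The dual constraints are convex quadratics with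
  the strictly feasible point 0, so Farkas' lemma applied to the constraints active at an optimal w
  either produces KKT multipliers, i.e. a primal point of value f.w, or an ascent direction
  contradicting optimality: there is no duality gap.  Hence every term vanishes, which says
  q = Delta(w/2) s.  Then (w/2, J s) is admissible for MVGS and its volume l J^2 s = l s + l Delta^2 s
  is at most l s + 2 l r, while conversely every admissible (z, s^) for MVGS yields the primal triple
  (s^/J, Delta s^/J, Delta^2 s^/(2 J)) of the same value.
*)

instantiation "fun" :: (type, real_vector) real_vector
begin

definition scaleR_fun :: "real \<Rightarrow> ('a \<Rightarrow> 'b) \<Rightarrow> 'a \<Rightarrow> 'b"
  where "scaleR_fun r f = (\<lambda>x. r *\<^sub>R f x)"

instance
  by standard (simp_all add: scaleR_fun_def fun_eq_iff scaleR_add_right scaleR_add_left)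

end

lemma scaleR_fun_apply [simp]: "(r *\<^sub>R f) x = r *\<^sub>R f x"
  by (simp add: scaleR_fun_def)

lemma farkas_lift_multipliers:
  fixes a :: "'j \<Rightarrow> 'v \<Rightarrow> real" and c :: "'v \<Rightarrow> real"
  assumes "finite J" "j0 \<notin> J" "0 < a j0 d" "\<And>j. j \<in> J \<Longrightarrow> a j d \<le> 0" "0 < c d"
    and \<mu>: "\<And>j. j \<in> J \<Longrightarrow> 0 \<le> \<mu> j"
      "\<And>x. a j0 d * c x - c d * a j0 x = (\<Sum>j\<in>J. \<mu> j * (a j0 d * a j x - a j d * a j0 x))"
  shows "\<exists>y. (\<forall>j\<in>insert j0 J. 0 \<le> y j) \<and> (\<forall>x. c x = (\<Sum>j\<in>insert j0 J. y j * a j x))"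
proof -
  define y0 where "y0 = (c d - (\<Sum>j\<in>J. \<mu> j * a j d)) / a j0 d"
  have "(\<Sum>j\<in>J. \<mu> j * a j d) \<le> 0"
    using \<mu>(1) assms(4) by (intro sum_nonpos mult_nonneg_nonpos) auto
  then have "0 \<le> y0"
    using assms(3,5) by (simp add: y0_def)
  moreover have "c x = y0 * a j0 x + (\<Sum>j\<in>J. \<mu> j * a j x)" for x
  proof -
    have "a j0 d * c x = (c d - (\<Sum>j\<in>J. \<mu> j * a j d)) * a j0 x + a j0 d * (\<Sum>j\<in>J. \<mu> j * a j x)"
      using \<mu>(2)[of x]
      by (simp add: sum_distrib_left sum_distrib_right sum_subtractf algebra_simps)
    then show ?thesis
      using assms(3) by (simp add: y0_def field_simps)
  qed
  moreover have "(\<Sum>j\<in>J. (\<mu>(j0 := y0)) j * a j x) = (\<Sum>j\<in>J. \<mu> j * a j x)" for x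
    using assms(2) by (intro sum.cong) auto
  ultimately show ?thesis
    using \<mu>(1) assms(1,2) by (intro exI[of _ "\<mu>(j0 := y0)"]) auto
qed

lemma farkas_alternative:
  fixes a :: "'j \<Rightarrow> 'v::real_vector \<Rightarrow> real" and c :: "'v \<Rightarrow> real"
  assumes "finite J" and "\<And>j. j \<in> J \<Longrightarrow> linear (a j)" and "linear c"
  shows "(\<exists>y. (\<forall>j\<in>J. 0 \<le> y j) \<and> (\<forall>x. c x = (\<Sum>j\<in>J. y j * a j x)))
       \<or> (\<exists>d. (\<forall>j\<in>J. a j d \<le> 0) \<and> 0 < c d)"
  using assms
proof (induction J arbitrary: a c rule: finite_induct)
  case empty
  show ?case
  proof (cases "\<exists>x. c x \<noteq> 0")
    case True
    then obtain x where "c x \<noteq> 0" by blast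
    moreover have "c (- x) = - c x"
      using empty.prems(2) by (rule linear_neg)
    ultimately have "0 < c x \<or> 0 < c (- x)" by linarith
    then show ?thesis by blast
  qed auto
next
  case (insert j0 J)
  have lin0: "linear (a j0)" and lin: "\<And>j. j \<in> J \<Longrightarrow> linear (a j)"
    using insert.prems(1) by auto
  consider (multipliers) y where "\<forall>j\<in>J. 0 \<le> y j" "\<forall>x. c x = (\<Sum>j\<in>J. y j * a j x)"
    | (direction) d where "\<forall>j\<in>J. a j d \<le> 0" "0 < c d"
    using insert.IH[of a c] lin insert.prems(2) by blast
  then show ?case
  proof cases
    case multipliers
    then have "(\<forall>j\<in>insert j0 J. 0 \<le> (y(j0 := 0)) j) \<and>
        (\<forall>x. c x = (\<Sum>j\<in>insert j0 J. (y(j0 := 0)) j * a j x))"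
      using insert.hyps by (auto intro!: sum.cong)
    then show ?thesis by blast
  next
    case direction
    show ?thesis
    proof (cases "a j0 d \<le> 0")
      case True
      then show ?thesis using direction by auto
    next
      case False
      \<comment> \<open>Project along \<open>d\<close> (where \<open>b j\<close> and \<open>c'\<close> vanish) to eliminate the constraint \<open>j0\<close>.\<close>
      define b where "b j x = a j0 d * a j x - a j d * a j0 x" for j x
      define c' where "c' x = a j0 d * c x - c d * a j0 x" for x
      have "linear (b j)" if "j \<in> J" for j
        using lin[OF that] lin0 by (simp add: b_def linear_iff algebra_simps)
      moreover have "linear c'"
        using insert.prems(2) lin0 by (simp add: c'_def linear_iff algebra_simps)
      ultimately consider
          (projected_multipliers) \<mu> where "\<forall>j\<in>J. 0 \<le> \<mu> j" "\<forall>x. c' x = (\<Sum>j\<in>J. \<mu> j * b j x)"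
        | (projected_direction) e where "\<forall>j\<in>J. b j e \<le> 0" "0 < c' e"
        using insert.IH[of b c'] by blast
      then show ?thesis
      proof cases
        case projected_multipliers
        then show ?thesis
          using farkas_lift_multipliers[of J j0 a d c \<mu>] insert.hyps False direction
          by (auto simp: b_def c'_def)
      next
        case projected_direction
        define d' where "d' = a j0 d *\<^sub>R e - a j0 e *\<^sub>R d"
        have "a j d' = b j e" if "j \<in> insert j0 J" for j
          using that lin lin0 by (auto simp: d'_def b_def linear_diff linear_scale)
        moreover have "c d' = c' e"
          using insert.prems(2) by (simp add: d'_def c'_def linear_diff linear_scale)
        ultimately show ?thesis
          using projected_direction by (intro disjI2 exI[of _ d']) (auto simp: b_def)
      qed
    qed
  qed
qed

lemma small_step_keeps_nonpos:
  fixes g a b :: "'k \<Rightarrow> real"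
  assumes "finite K" and "\<And>k. k \<in> K \<Longrightarrow> g k \<le> 0"
    and "\<And>k. k \<in> K \<Longrightarrow> g k = 0 \<Longrightarrow> a k < 0"
  shows "\<exists>\<epsilon>>0. \<forall>k\<in>K. g k + \<epsilon> * a k + \<epsilon>\<^sup>2 * b k \<le> 0"
proof -
  have step: "\<forall>\<^sub>F \<epsilon> in at_right 0. g k + \<epsilon> * a k + \<epsilon>\<^sup>2 * b k \<le> 0" if k: "k \<in> K" for k
  proof (cases "g k = 0")
    case True
    have "((\<lambda>\<epsilon>. a k + \<epsilon> * b k) \<longlongrightarrow> a k) (at_right 0)"
      by (auto intro!: tendsto_eq_intros)
    then have "\<forall>\<^sub>F \<epsilon> in at_right 0. a k + \<epsilon> * b k < 0"
      using assms(3)[OF k True] by (rule order_tendstoD)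
    then show ?thesis
      using eventually_at_right_less[of 0]
    proof eventually_elim
      case (elim \<epsilon>)
      have "g k + \<epsilon> * a k + \<epsilon>\<^sup>2 * b k = \<epsilon> * (a k + \<epsilon> * b k)"
        by (simp add: True power2_eq_square algebra_simps)
      then show ?case
        using elim by (simp add: mult_pos_neg less_imp_le)
    qed
  next
    case False
    have "((\<lambda>\<epsilon>. g k + \<epsilon> * a k + \<epsilon>\<^sup>2 * b k) \<longlongrightarrow> g k) (at_right 0)"
      by (auto intro!: tendsto_eq_intros)
    moreover have "g k < 0" using assms(2)[OF k] False by simp
    ultimately show ?thesis
      by (rule order_tendstoD(2)[THEN eventually_mono]) simp
  qed
  have "\<forall>\<^sub>F \<epsilon> in at_right 0. \<forall>k\<in>K. g k + \<epsilon> * a k + \<epsilon>\<^sup>2 * b k \<le> 0"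
    using assms(1) step by (intro eventually_ball_finite) auto
  then have "\<forall>\<^sub>F \<epsilon> in at_right 0. 0 < \<epsilon> \<and> (\<forall>k\<in>K. g k + \<epsilon> * a k + \<epsilon>\<^sup>2 * b k \<le> 0)"
    using eventually_at_right_less[of "0::real"] by eventually_elim auto
  then show ?thesis
    using eventually_happens'[OF trivial_limit_at_right_real] by blast
qed

lemma rotated_cone_pairing:
  fixes s r q l t w :: real
  assumes "0 \<le> s" "0 \<le> r" "q\<^sup>2 \<le> 2 * r * s" "0 < l" "w\<^sup>2 \<le> 4 * l * t"
  shows "0 \<le> s * t + 2 * l * r - q * w"
    and "s * t + 2 * l * r - q * w = 0 \<Longrightarrow> 2 * l * q = s * w"
proof -
  \<comment> \<open>Multiplied by \<open>4 l s\<close>, the pairing dominates the square \<open>(s w - 2 l q)\<^sup>2\<close>.\<close>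
  have main: "(s * w - 2 * l * q)\<^sup>2 \<le> 4 * l * s * (s * t + 2 * l * r - q * w)"
  proof -
    have "0 \<le> s\<^sup>2 * (4 * l * t - w\<^sup>2)" "0 \<le> l\<^sup>2 * (2 * r * s - q\<^sup>2)"
      using assms(3,5) by simp_all
    then have "(s * w - 2 * l * q)\<^sup>2
        \<le> (s * w - 2 * l * q)\<^sup>2 + s\<^sup>2 * (4 * l * t - w\<^sup>2) + 4 * (l\<^sup>2 * (2 * r * s - q\<^sup>2))"
      by simp
    also have "\<dots> = 4 * l * s * (s * t + 2 * l * r - q * w)"
      by (simp add: power2_eq_square algebra_simps)
    finally show ?thesis .
  qed
  have "0 \<le> s * t + 2 * l * r - q * w \<and> (s * t + 2 * l * r - q * w = 0 \<longrightarrow> 2 * l * q = s * w)"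
  proof (cases "s = 0")
    case True
    then have "q = 0" using assms(3) by simp
    then show ?thesis using True assms(2,4) by simp
  next
    case False
    then have pos: "0 < 4 * l * s" using assms(1,4) by simp
    have "0 \<le> 4 * l * s * (s * t + 2 * l * r - q * w)"
      using main zero_le_power2 order_trans by blast
    then have "0 \<le> s * t + 2 * l * r - q * w"
      using pos by (simp add: zero_le_mult_iff)
    moreover have "2 * l * q = s * w" if "s * t + 2 * l * r - q * w = 0"
      using main that by simp
    ultimately show ?thesis by blast
  qed
  then show "0 \<le> s * t + 2 * l * r - q * w"
    and "s * t + 2 * l * r - q * w = 0 \<Longrightarrow> 2 * l * q = s * w" by auto
qed

lemma mv_add [simp]: "mv n M (v + v') k = mv n M v k + mv n M v' k"
  by (simp add: mv_def sum.distrib distrib_left)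

lemma mv_scaleR [simp]: "mv n M (a *\<^sub>R v) k = a * mv n M v k"
  by (simp add: mv_def sum_distrib_left mult.left_commute)

lemma mv_diff [simp]: "mv n M (v - v') k = mv n M v k - mv n M v' k"
  by (simp add: mv_def sum_subtractf right_diff_distrib)

lemma mv_zero [simp]: "mv n M 0 k = 0"
  by (simp add: mv_def)

lemma mv_indicator:
  assumes "i \<in> {1..n}"
  shows "mv n M (\<lambda>j. if j = i then 1 else 0) k = M k i"
  using assms by (simp add: mv_def if_distrib cong: if_cong)

lemma sum_mult_mv_eq_sum_mult_tmv:
  "(\<Sum>k\<in>{1..m}. x k * mv n M v k) = (\<Sum>i\<in>{1..n}. v i * tmv m M x i)"
  unfolding mv_def tmv_def
  by (simp add: sum_distrib_left sum_distrib_right algebra_simps) (rule sum.swap)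

lemma D_obj_add [simp]: "D_obj n f (w + w') = D_obj n f w + D_obj n f w'"
  by (simp add: D_obj_def sum.distrib distrib_left)

lemma D_obj_scaleR [simp]: "D_obj n f (a *\<^sub>R w) = a * D_obj n f w"
  by (simp add: D_obj_def sum_distrib_left mult.left_commute)

lemma D_obj_diff [simp]: "D_obj n f (w - w') = D_obj n f w - D_obj n f w'"
  by (simp add: D_obj_def sum_subtractf right_diff_distrib)

lemma D_obj_zero [simp]: "D_obj n f 0 = 0"
  by (simp add: D_obj_def)

lemma Z_X_eq_of_P_solves:
  assumes "P_solves chi n chim chip m f s q r"
  shows "Z_X chi n chim chip m f = P_obj chim chip m s r"
  unfolding Z_X_def
proof (rule cInf_eq_minimum)
  show "P_obj chim chip m s r \<in> {P_obj chim chip m s r |s q r. P_feasible chi n chim chip m f s q r}"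
    using assms by (auto simp: P_solves_def)
qed (use assms in \<open>auto simp: P_solves_def\<close>)

lemma V_min_eq_of_MVGS_solves:
  assumes "MVGS_solves chi n chim chip m f z shat"
  shows "V_min chi n chim chip m f = MVGS_obj chi n chim chip m z shat"
  unfolding V_min_def
proof (rule cInf_eq_minimum)
  show "MVGS_obj chi n chim chip m z shat
      \<in> {MVGS_obj chi n chim chip m z shat |z shat. MVGS_feasible chi n chim chip m f z shat}"
    using assms by (auto simp: MVGS_solves_def)
qed (use assms in \<open>auto simp: MVGS_solves_def\<close>)

lemma Jkk_pos: "0 < Jkk chi n chim chip z k"
  by (simp add: Jkk_def add_pos_nonneg)

lemma Jkk_squared: "(Jkk chi n chim chip z k)\<^sup>2 = 1 + (Delta chi n chim chip z k)\<^sup>2"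
  by (simp add: Jkk_def add_nonneg_nonneg)

lemma len_pos_of_pairs:
  assumes "bij_betw (\<lambda>k. {chim k, chip k}) {1..m} {{p, p'} | p p'. p \<in> X \<and> p' \<in> X \<and> p \<noteq> p'}"
    and "k \<in> {1..m}"
  shows "0 < len chim chip k"
proof -
  obtain p p' where "{chim k, chip k} = {p, p'}" "p \<noteq> p'"
    using bij_betw_apply[OF assms] by blast
  then have "chim k \<noteq> chip k"
    by (metis doubleton_eq_iff)
  then show ?thesis
    by (simp add: len_def)
qed

locale ground_structure =
  fixes chi chim chip :: "nat \<Rightarrow> pt" and n m :: nat and f :: "nat \<Rightarrow> real"
  assumes len_pos: "k \<in> {1..m} \<Longrightarrow> 0 < len chim chip k"
begin

abbreviation l :: "nat \<Rightarrow> real" where "l \<equiv> len chim chip"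

definition elong :: "(nat \<Rightarrow> real) \<Rightarrow> (nat \<Rightarrow> real) \<Rightarrow> nat \<Rightarrow> real" where
  "elong u1 u2 k = mv n (matB1 chi chim chip) u1 k + mv n (matB2 chi chim chip) u2 k"

definition jump :: "(nat \<Rightarrow> real) \<Rightarrow> nat \<Rightarrow> real" where
  "jump w k = mv n (matD chi chim chip) w k"

definition dual_defect :: "(nat \<Rightarrow> real) \<Rightarrow> (nat \<Rightarrow> real) \<Rightarrow> (nat \<Rightarrow> real) \<Rightarrow> nat \<Rightarrow> real" where
  "dual_defect u1 u2 w k = (jump w k)\<^sup>2 - 4 * l k * (l k - elong u1 u2 k)"

definition dual_defect_deriv ::
    "(nat \<Rightarrow> real) \<Rightarrow> (nat \<Rightarrow> real) \<Rightarrow> (nat \<Rightarrow> real) \<Rightarrow> (nat \<Rightarrow> real) \<Rightarrow> nat \<Rightarrow> real" where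
  "dual_defect_deriv w e1 e2 e3 k = 2 * jump w k * jump e3 k + 4 * l k * elong e1 e2 k"

definition duality_gap_term ::
    "(nat \<Rightarrow> real) \<Rightarrow> (nat \<Rightarrow> real) \<Rightarrow> (nat \<Rightarrow> real) \<Rightarrow> (nat \<Rightarrow> real) \<Rightarrow> (nat \<Rightarrow> real)
      \<Rightarrow> (nat \<Rightarrow> real) \<Rightarrow> nat \<Rightarrow> real" where
  "duality_gap_term s q r u1 u2 w k = s k * (l k - elong u1 u2 k) + 2 * l k * r k - q k * jump w k"

lemma elong_add_scaleR:
  "elong (u1 + a *\<^sub>R e1) (u2 + a *\<^sub>R e2) k = elong u1 u2 k + a * elong e1 e2 k"
  by (simp add: elong_def algebra_simps)

lemma dual_defect_step:
  "dual_defect (u1 + \<epsilon> *\<^sub>R e1) (u2 + \<epsilon> *\<^sub>R e2) (w + \<epsilon> *\<^sub>R e3) k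
     = dual_defect u1 u2 w k + \<epsilon> * dual_defect_deriv w e1 e2 e3 k + \<epsilon>\<^sup>2 * (jump e3 k)\<^sup>2"
  by (simp add: dual_defect_def dual_defect_deriv_def jump_def elong_add_scaleR
      power2_eq_square algebra_simps)

lemma D_feasible_iff:
  "D_feasible chi n chim chip m u1 u2 w \<longleftrightarrow> (\<forall>k\<in>{1..m}. dual_defect u1 u2 w k \<le> 0)"
proof
  assume "D_feasible chi n chim chip m u1 u2 w"
  then obtain t1 t2 t3 where t: "\<forall>k\<in>{1..m}. t2 k + elong u1 u2 k = l k \<and>
      t3 k + jump w k = 0 \<and> t1 k = 2 * l k \<and> inK (t1 k) (t2 k) (t3 k)"
    unfolding D_feasible_def elong_def jump_def by (metis add.assoc)
  show "\<forall>k\<in>{1..m}. dual_defect u1 u2 w k \<le> 0"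
  proof
    fix k assume "k \<in> {1..m}"
    then have "t2 k + elong u1 u2 k = l k \<and> t3 k + jump w k = 0 \<and> t1 k = 2 * l k
        \<and> inK (t1 k) (t2 k) (t3 k)"
      using t by blast
    then have "t2 k = l k - elong u1 u2 k" "t3 k = - jump w k" "(t3 k)\<^sup>2 \<le> 4 * l k * t2 k"
      by (auto simp: inK_def)
    then show "dual_defect u1 u2 w k \<le> 0"
      by (simp add: dual_defect_def)
  qed
next
  assume defect: "\<forall>k\<in>{1..m}. dual_defect u1 u2 w k \<le> 0"
  have witness: "0 \<le> 2 * l k" "0 \<le> l k - elong u1 u2 k"
      "inK (2 * l k) (l k - elong u1 u2 k) (- jump w k)" if k: "k \<in> {1..m}" for k
  proof -
    have "(jump w k)\<^sup>2 \<le> 4 * l k * (l k - elong u1 u2 k)"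
      using defect k unfolding dual_defect_def by auto
    moreover from order_trans[OF zero_le_power2 this] have "0 \<le> l k - elong u1 u2 k"
      using len_pos[OF k] by (simp add: zero_le_mult_iff)
    ultimately show "0 \<le> 2 * l k" "0 \<le> l k - elong u1 u2 k"
      "inK (2 * l k) (l k - elong u1 u2 k) (- jump w k)"
      using len_pos[OF k] by (simp_all add: inK_def)
  qed
  show "D_feasible chi n chim chip m u1 u2 w"
    unfolding D_feasible_def
    by (rule exI[of _ "\<lambda>k. 2 * l k"], rule exI[of _ "\<lambda>k. l k - elong u1 u2 k"],
        rule exI[of _ "\<lambda>k. - jump w k"]) (use witness in \<open>simp add: elong_def jump_def\<close>)
qed

lemma P_obj_eq_sum: "P_obj chim chip m s r = (\<Sum>k\<in>{1..m}. l k * s k + 2 * l k * r k)"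
  by (simp add: P_obj_def sum.distrib sum_distrib_left mult.assoc)

lemma sum_mult_elong_eq_0:
  assumes "\<forall>i\<in>{1..n}. tmv m (matB1 chi chim chip) s i = 0 \<and> tmv m (matB2 chi chim chip) s i = 0"
  shows "(\<Sum>k\<in>{1..m}. s k * elong u1 u2 k) = 0"
proof -
  have "(\<Sum>k\<in>{1..m}. s k * elong u1 u2 k)
      = (\<Sum>i\<in>{1..n}. u1 i * tmv m (matB1 chi chim chip) s i)
        + (\<Sum>i\<in>{1..n}. u2 i * tmv m (matB2 chi chim chip) s i)"
    unfolding elong_def distrib_left sum.distrib sum_mult_mv_eq_sum_mult_tmv ..
  also have "\<dots> = 0"
    using assms by simp
  finally show ?thesis .
qed

lemma sum_mult_jump_eq_D_obj:
  assumes "\<forall>i\<in>{1..n}. tmv m (matD chi chim chip) q i = f i"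
  shows "(\<Sum>k\<in>{1..m}. q k * jump w k) = D_obj n f w"
  unfolding jump_def sum_mult_mv_eq_sum_mult_tmv D_obj_def
  using assms by (intro sum.cong) (auto simp: mult.commute)

lemma P_obj_minus_D_obj:
  assumes "P_feasible chi n chim chip m f s q r"
  shows "P_obj chim chip m s r - D_obj n f w = (\<Sum>k\<in>{1..m}. duality_gap_term s q r u1 u2 w k)"
proof -
  have "(\<Sum>k\<in>{1..m}. duality_gap_term s q r u1 u2 w k)
      = P_obj chim chip m s r - (\<Sum>k\<in>{1..m}. s k * elong u1 u2 k) - (\<Sum>k\<in>{1..m}. q k * jump w k)"
    by (simp add: duality_gap_term_def P_obj_eq_sum sum_subtractf[symmetric] algebra_simps)
  moreover have "(\<Sum>k\<in>{1..m}. s k * elong u1 u2 k) = 0"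
    using assms by (intro sum_mult_elong_eq_0) (auto simp: P_feasible_def)
  moreover have "(\<Sum>k\<in>{1..m}. q k * jump w k) = D_obj n f w"
    using assms by (intro sum_mult_jump_eq_D_obj) (auto simp: P_feasible_def)
  ultimately show ?thesis
    by linarith
qed

lemma duality_gap_term_nonneg:
  assumes "P_feasible chi n chim chip m f s q r" "D_feasible chi n chim chip m u1 u2 w" "k \<in> {1..m}"
  shows "0 \<le> duality_gap_term s q r u1 u2 w k"
    and "duality_gap_term s q r u1 u2 w k = 0 \<Longrightarrow> 2 * l k * q k = s k * jump w k"
proof -
  have "0 \<le> s k" "0 \<le> r k" "(q k)\<^sup>2 \<le> 2 * r k * s k"
    using assms(1,3) by (auto simp: P_feasible_def inK_def)
  moreover have "(jump w k)\<^sup>2 \<le> 4 * l k * (l k - elong u1 u2 k)"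
    using assms(2,3) by (auto simp: D_feasible_iff dual_defect_def)
  ultimately show "0 \<le> duality_gap_term s q r u1 u2 w k"
    and "duality_gap_term s q r u1 u2 w k = 0 \<Longrightarrow> 2 * l k * q k = s k * jump w k"
    using rotated_cone_pairing[OF _ _ _ len_pos[OF assms(3)]] by (auto simp: duality_gap_term_def)
qed

lemma stationarity_of_multipliers:
  assumes "\<And>e1 e2 e3. D_obj n f e3 = (\<Sum>k\<in>{1..m}. \<Lambda> k * dual_defect_deriv w e1 e2 e3 k)"
    and "i \<in> {1..n}"
  shows "tmv m (matB1 chi chim chip) (\<lambda>k. 4 * l k * \<Lambda> k) i = 0"
    and "tmv m (matB2 chi chim chip) (\<lambda>k. 4 * l k * \<Lambda> k) i = 0"
    and "tmv m (matD chi chim chip) (\<lambda>k. 2 * \<Lambda> k * jump w k) i = f i"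
proof -
  define \<delta> where "\<delta> j = (if j = i then 1 else 0 :: real)" for j
  have "D_obj n f \<delta> = f i"
    using assms(2) by (simp add: D_obj_def \<delta>_def if_distrib cong: if_cong)
  moreover have "mv n M \<delta> k = M k i" for M k
    using assms(2) unfolding \<delta>_def by (rule mv_indicator)
  ultimately show "tmv m (matB1 chi chim chip) (\<lambda>k. 4 * l k * \<Lambda> k) i = 0"
    and "tmv m (matB2 chi chim chip) (\<lambda>k. 4 * l k * \<Lambda> k) i = 0"
    and "tmv m (matD chi chim chip) (\<lambda>k. 2 * \<Lambda> k * jump w k) i = f i"
    using assms(1)[of \<delta> 0 0] assms(1)[of 0 \<delta> 0] assms(1)[of 0 0 \<delta>]
    by (simp_all add: tmv_def dual_defect_deriv_def elong_def jump_def mult_ac)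
qed

lemma primal_point_of_multipliers:
  assumes "\<forall>k\<in>{1..m}. 0 \<le> \<Lambda> k \<and> \<Lambda> k * dual_defect u1 u2 w k = 0"
    and "\<And>e1 e2 e3. D_obj n f e3 = (\<Sum>k\<in>{1..m}. \<Lambda> k * dual_defect_deriv w e1 e2 e3 k)"
  shows "\<exists>s q r. P_feasible chi n chim chip m f s q r \<and> P_obj chim chip m s r = D_obj n f w"
proof -
  define s where "s = (\<lambda>k. 4 * l k * \<Lambda> k)"
  define q where "q = (\<lambda>k. 2 * \<Lambda> k * jump w k)"
  define r where "r k = \<Lambda> k * (jump w k)\<^sup>2 / (2 * l k)" for k
  have feasible: "P_feasible chi n chim chip m f s q r"
    unfolding P_feasible_def
  proof (intro conjI ballI)
    fix k assume k: "k \<in> {1..m}"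
    then show "0 \<le> s k" "0 \<le> r k" "inK (r k) (s k) (q k)"
      using assms(1) len_pos[OF k]
      by (auto simp: s_def r_def q_def inK_def power2_eq_square field_simps)
  next
    fix i assume "i \<in> {1..n}"
    then show "tmv m (matB1 chi chim chip) s i = 0" "tmv m (matB2 chi chim chip) s i = 0"
      "tmv m (matD chi chim chip) q i = f i"
      unfolding s_def q_def by (fact stationarity_of_multipliers[OF assms(2)])+
  qed
  have "duality_gap_term s q r u1 u2 w k = - (\<Lambda> k * dual_defect u1 u2 w k)" if "k \<in> {1..m}" for k
    using len_pos[OF that]
    by (simp add: duality_gap_term_def dual_defect_def s_def q_def r_def field_simps power2_eq_square)
  then have "P_obj chim chip m s r = D_obj n f w"
    using P_obj_minus_D_obj[OF feasible, of w u1 u2] assms(1) by simp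
  with feasible show ?thesis
    by blast
qed

lemma dual_improving_point:
  assumes feasible: "D_feasible chi n chim chip m u1 u2 w"
    and descent: "\<And>k. k \<in> {1..m} \<Longrightarrow> dual_defect u1 u2 w k = 0 \<Longrightarrow> dual_defect_deriv w d1 d2 d3 k \<le> 0"
    and ascent: "0 < D_obj n f d3"
  shows "\<exists>u1' u2' w'. D_feasible chi n chim chip m u1' u2' w' \<and> D_obj n f w < D_obj n f w'"
proof -
  define \<kappa> where "\<kappa> = (\<bar>D_obj n f w\<bar> + 1) / D_obj n f d3"
  define e1 where "e1 = \<kappa> *\<^sub>R d1 - u1"
  define e2 where "e2 = \<kappa> *\<^sub>R d2 - u2"
  define e3 where "e3 = \<kappa> *\<^sub>R d3 - w"
  have "0 < \<kappa>"
    using ascent by (simp add: \<kappa>_def add_pos_nonneg)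
  have ascent': "0 < D_obj n f e3"
    using ascent by (simp add: e3_def \<kappa>_def)
  \<comment> \<open>The direction towards the strictly feasible point \<open>0\<close> strictly decreases every active
    constraint; adding it to a large multiple of \<open>d\<close> keeps the ascent.\<close>
  have strict: "dual_defect_deriv w e1 e2 e3 k < 0" if "k \<in> {1..m}" "dual_defect u1 u2 w k = 0" for k
  proof -
    have "dual_defect_deriv w e1 e2 e3 k
        = \<kappa> * dual_defect_deriv w d1 d2 d3 k - ((jump w k)\<^sup>2 + 4 * (l k)\<^sup>2 + dual_defect u1 u2 w k)"
      by (simp add: e1_def e2_def e3_def dual_defect_deriv_def dual_defect_def elong_def jump_def
          power2_eq_square algebra_simps)
    moreover have "\<kappa> * dual_defect_deriv w d1 d2 d3 k \<le> 0"
      using descent[OF that] \<open>0 < \<kappa>\<close> by (simp add: mult_nonneg_nonpos)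
    moreover have "0 < (jump w k)\<^sup>2 + 4 * (l k)\<^sup>2"
      using len_pos[OF that(1)] by (simp add: add_nonneg_pos)
    ultimately show ?thesis
      using that(2) by linarith
  qed
  have "\<exists>\<epsilon>>0. \<forall>k\<in>{1..m}. dual_defect u1 u2 w k + \<epsilon> * dual_defect_deriv w e1 e2 e3 k
      + \<epsilon>\<^sup>2 * (jump e3 k)\<^sup>2 \<le> 0"
    by (rule small_step_keeps_nonpos) (use feasible strict in \<open>auto simp: D_feasible_iff\<close>)
  then obtain \<epsilon> where "0 < \<epsilon>"
    and step: "\<forall>k\<in>{1..m}. dual_defect u1 u2 w k + \<epsilon> * dual_defect_deriv w e1 e2 e3 k
        + \<epsilon>\<^sup>2 * (jump e3 k)\<^sup>2 \<le> 0"
    by blast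
  have "D_feasible chi n chim chip m (u1 + \<epsilon> *\<^sub>R e1) (u2 + \<epsilon> *\<^sub>R e2) (w + \<epsilon> *\<^sub>R e3)"
    using step by (simp add: D_feasible_iff dual_defect_step)
  moreover have "D_obj n f w < D_obj n f (w + \<epsilon> *\<^sub>R e3)"
    using \<open>0 < \<epsilon>\<close> ascent' by simp
  ultimately show ?thesis
    by blast
qed

lemma P_obj_le_D_obj:
  assumes primal: "P_solves chi n chim chip m f s q r" and dual: "D_solves chi n chim chip m f u1 u2 w"
  shows "P_obj chim chip m s r \<le> D_obj n f w"
proof -
  define A where "A = {k \<in> {1..m}. dual_defect u1 u2 w k = 0}"
  define a where "a k = (\<lambda>(e1, e2, e3). dual_defect_deriv w e1 e2 e3 k)" for k
  define c where "c = (\<lambda>(e1 :: nat \<Rightarrow> real, e2 :: nat \<Rightarrow> real, e3). D_obj n f e3)"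
  have "finite A"
    by (simp add: A_def)
  moreover have "linear (a k)" for k
    by (auto simp: linear_iff a_def dual_defect_deriv_def elong_def jump_def algebra_simps)
  moreover have "linear c"
    by (auto simp: linear_iff c_def)
  ultimately consider
      (multipliers) y where "\<forall>k\<in>A. 0 \<le> y k" "\<forall>x. c x = (\<Sum>k\<in>A. y k * a k x)"
    | (direction) d where "\<forall>k\<in>A. a k d \<le> 0" "0 < c d"
    using farkas_alternative[of A a c] by blast
  then show ?thesis
  proof cases
    case multipliers
    define \<Lambda> where "\<Lambda> k = (if k \<in> A then y k else 0)" for k
    have "D_obj n f e3 = (\<Sum>k\<in>{1..m}. \<Lambda> k * dual_defect_deriv w e1 e2 e3 k)" for e1 e2 e3
    proof -
      have "(\<Sum>k\<in>{1..m}. \<Lambda> k * dual_defect_deriv w e1 e2 e3 k) = (\<Sum>k\<in>A. y k * a k (e1, e2, e3))"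
        by (rule sum.mono_neutral_cong_right) (auto simp: A_def \<Lambda>_def a_def)
      then show ?thesis
        using multipliers(2) by (simp add: c_def)
    qed
    moreover have "\<forall>k\<in>{1..m}. 0 \<le> \<Lambda> k \<and> \<Lambda> k * dual_defect u1 u2 w k = 0"
      using multipliers(1) by (auto simp: \<Lambda>_def A_def)
    ultimately obtain s' q' r' where "P_feasible chi n chim chip m f s' q' r'"
      and "P_obj chim chip m s' r' = D_obj n f w"
      using primal_point_of_multipliers by blast
    then show ?thesis
      using primal unfolding P_solves_def by metis
  next
    case direction
    obtain d1 d2 d3 where "d = (d1, d2, d3)"
      by (cases d) auto
    with direction dual have "\<exists>u1' u2' w'. D_feasible chi n chim chip m u1' u2' w' \<and> D_obj n f w < D_obj n f w'"
      by (intro dual_improving_point) (auto simp: D_solves_def A_def a_def c_def)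
    with dual show ?thesis
      by (auto simp: D_solves_def not_less[symmetric])
  qed
qed

lemma Delta_half: "Delta chi n chim chip (\<lambda>i. w i / 2) k = jump w k / (2 * l k)"
  by (simp add: Delta_def jump_def mv_def sum_divide_distrib)

lemma complementary_slackness:
  assumes primal: "P_solves chi n chim chip m f s q r" and dual: "D_solves chi n chim chip m f u1 u2 w"
    and k: "k \<in> {1..m}"
  shows "q k = Delta chi n chim chip (\<lambda>i. w i / 2) k * s k"
proof -
  have feasible: "P_feasible chi n chim chip m f s q r" "D_feasible chi n chim chip m u1 u2 w"
    using primal dual by (auto simp: P_solves_def D_solves_def)
  have "(\<Sum>k\<in>{1..m}. duality_gap_term s q r u1 u2 w k) \<le> 0"
    using P_obj_minus_D_obj[OF feasible(1)] P_obj_le_D_obj[OF primal dual] by simp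
  then have "duality_gap_term s q r u1 u2 w k = 0"
    using duality_gap_term_nonneg(1)[OF feasible] k
    by (metis (no_types, lifting) antisym finite_atLeastAtMost sum_nonneg sum_nonneg_eq_0_iff)
  then have "2 * l k * q k = s k * jump w k"
    by (rule duality_gap_term_nonneg(2)[OF feasible k])
  then show ?thesis
    using len_pos[OF k] by (simp add: Delta_half field_simps)
qed

lemma P_point_of_MVGS_feasible:
  assumes "MVGS_feasible chi n chim chip m f z shat"
  shows "\<exists>s q r. P_feasible chi n chim chip m f s q r
    \<and> P_obj chim chip m s r = MVGS_obj chi n chim chip m z shat"
proof -
  define J where "J = Jkk chi n chim chip z"
  define \<Delta> where "\<Delta> = Delta chi n chim chip z"
  define s where "s = (\<lambda>k. shat k / J k)"
  define q where "q = (\<lambda>k. \<Delta> k * shat k / J k)"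
  define r where "r = (\<lambda>k. (\<Delta> k)\<^sup>2 * s k / 2)"
  have "P_feasible chi n chim chip m f s q r"
    unfolding P_feasible_def
  proof (intro conjI ballI)
    fix k assume "k \<in> {1..m}"
    then have "0 \<le> s k"
      using assms Jkk_pos[of chi n chim chip z k] by (simp add: MVGS_feasible_def s_def J_def)
    moreover have "q k = \<Delta> k * s k"
      by (simp add: q_def s_def)
    ultimately show "0 \<le> s k" "0 \<le> r k" "inK (r k) (s k) (q k)"
      by (simp_all add: r_def inK_def power2_eq_square)
  qed (use assms in \<open>simp_all add: MVGS_feasible_def Let_def s_def q_def J_def \<Delta>_def\<close>)
  moreover have "l k * s k + 2 * l k * r k = lhat chi n chim chip z k * shat k" for k
    using Jkk_pos[of chi n chim chip z k] Jkk_squared[of chi n chim chip z k]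
    by (simp add: lhat_def s_def r_def J_def \<Delta>_def field_simps power2_eq_square)
  ultimately have "P_feasible chi n chim chip m f s q r
      \<and> P_obj chim chip m s r = MVGS_obj chi n chim chip m z shat"
    by (simp add: P_obj_eq_sum MVGS_obj_def)
  then show ?thesis
    by blast
qed

lemma MVGS_point_of_P_feasible:
  assumes feasible: "P_feasible chi n chim chip m f s q r"
    and q: "\<forall>k\<in>{1..m}. q k = Delta chi n chim chip z k * s k"
  shows "MVGS_feasible chi n chim chip m f z (\<lambda>k. Jkk chi n chim chip z k * s k)"
    and "MVGS_obj chi n chim chip m z (\<lambda>k. Jkk chi n chim chip z k * s k) \<le> P_obj chim chip m s r"
proof -
  define J where "J = Jkk chi n chim chip z"
  define \<Delta> where "\<Delta> = Delta chi n chim chip z"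
  have J_nonzero: "J k \<noteq> 0" for k
    using Jkk_pos[of chi n chim chip z k] by (simp add: J_def)
  have "(\<lambda>k. J k * s k / J k) = s"
    using J_nonzero by simp
  moreover have "tmv m (matD chi chim chip) (\<lambda>k. \<Delta> k * (J k * s k) / J k) i
      = tmv m (matD chi chim chip) q i" for i
    using q J_nonzero by (auto simp: tmv_def \<Delta>_def intro!: sum.cong)
  moreover have "0 \<le> J k * s k" if "k \<in> {1..m}" for k
    using feasible that Jkk_pos[of chi n chim chip z k] by (simp add: P_feasible_def J_def)
  ultimately show "MVGS_feasible chi n chim chip m f z (\<lambda>k. Jkk chi n chim chip z k * s k)"
    using feasible by (simp add: MVGS_feasible_def P_feasible_def Let_def J_def \<Delta>_def)
  have "lhat chi n chim chip z k * (J k * s k) \<le> l k * s k + 2 * l k * r k" if k: "k \<in> {1..m}" for k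
  proof -
    have "0 \<le> s k" "0 \<le> r k" "(\<Delta> k * s k)\<^sup>2 \<le> 2 * r k * s k"
      using feasible q k by (auto simp: P_feasible_def inK_def \<Delta>_def)
    then have "(\<Delta> k)\<^sup>2 * s k \<le> 2 * r k"
      by (cases "s k = 0") (auto simp: power2_eq_square mult.assoc mult_le_cancel_right_pos)
    then have "l k * ((\<Delta> k)\<^sup>2 * s k) \<le> l k * (2 * r k)"
      using len_pos[OF k] by simp
    then show ?thesis
      using Jkk_squared[of chi n chim chip z k]
      by (simp add: lhat_def J_def \<Delta>_def power2_eq_square algebra_simps)
  qed
  then show "MVGS_obj chi n chim chip m z (\<lambda>k. Jkk chi n chim chip z k * s k) \<le> P_obj chim chip m s r"
    unfolding MVGS_obj_def P_obj_eq_sum J_def by (rule sum_mono)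
qed

theorem MVGS_solves_of_primal_dual:
  assumes primal: "P_solves chi n chim chip m f s q r" and dual: "D_solves chi n chim chip m f u1 u2 w"
  defines "z \<equiv> \<lambda>i. w i / 2"
  defines "shat \<equiv> \<lambda>k. Jkk chi n chim chip z k * s k"
  shows "MVGS_solves chi n chim chip m f z shat
    \<and> V_min chi n chim chip m f = Z_X chi n chim chip m f"
proof -
  have lower: "P_obj chim chip m s r \<le> MVGS_obj chi n chim chip m z' shat'"
    if "MVGS_feasible chi n chim chip m f z' shat'" for z' shat'
    using P_point_of_MVGS_feasible[OF that] primal unfolding P_solves_def by metis
  have "P_feasible chi n chim chip m f s q r"
    using primal by (simp add: P_solves_def)
  moreover have "\<forall>k\<in>{1..m}. q k = Delta chi n chim chip z k * s k"
    using complementary_slackness[OF primal dual] by (simp add: z_def)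
  ultimately have feasible: "MVGS_feasible chi n chim chip m f z shat"
    and upper: "MVGS_obj chi n chim chip m z shat \<le> P_obj chim chip m s r"
    unfolding shat_def by (rule MVGS_point_of_P_feasible)+
  have optimal_value: "MVGS_obj chi n chim chip m z shat = P_obj chim chip m s r"
    using upper lower[OF feasible] by simp
  have "MVGS_solves chi n chim chip m f z shat"
    unfolding MVGS_solves_def using feasible lower optimal_value by simp
  moreover from this have "V_min chi n chim chip m f = Z_X chi n chim chip m f"
    using V_min_eq_of_MVGS_solves Z_X_eq_of_P_solves[OF primal] optimal_value by simp
  ultimately show ?thesis ..
qed

end

theorem theorem6p2:
  fixes \<Omega> X :: "pt set" and fX :: "pt \<Rightarrow> real"
    and chi chim chip :: "nat \<Rightarrow> pt" and n m :: nat
    and s q r u1 u2 w :: "nat \<Rightarrow> real"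
  assumes dom: "open \<Omega>" "connected \<Omega>" "bounded \<Omega>" "\<Omega> \<noteq> {}"
    and X: "finite X" "X \<subseteq> closure \<Omega>"
       "X - frontier \<Omega> \<subseteq> interior (convex hull (X \<inter> frontier \<Omega>))"
    and n_def: "n = card (X - frontier \<Omega>)"
    and chi: "bij_betw chi {1..n} (X - frontier \<Omega>)"
    and m_def: "m = card X * (card X - 1) div 2"
    and pairs: "bij_betw (\<lambda>k. {chim k, chip k}) {1..m} {{p, p'} | p p'. p \<in> X \<and> p' \<in> X \<and> p \<noteq> p'}"
    and primal: "P_solves chi n chim chip m (\<lambda>i. fX (chi i)) s q r"
    and dual: "D_solves chi n chim chip m (\<lambda>i. fX (chi i)) u1 u2 w"
  shows "MVGS_solves chi n chim chip m (\<lambda>i. fX (chi i)) (\<lambda>i. w i / 2)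
           (\<lambda>k. Jkk chi n chim chip (\<lambda>i. w i / 2) k * s k)
       \<and> V_min chi n chim chip m (\<lambda>i. fX (chi i)) = Z_X chi n chim chip m (\<lambda>i. fX (chi i))"
proof -
  interpret ground_structure chi chim chip n m "\<lambda>i. fX (chi i)"
    using len_pos_of_pairs[OF pairs] by unfold_locales
  show ?thesis
    using MVGS_solves_of_primal_dual[OF primal dual] by simp
qed

end
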